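(* Let $I$ be a finite nonempty set and let $\phi=\bigwedge_{i\in I}\phi_i$, where each $\phi_i$ is a formula of the intuitionistic propositional calculus that is disjunctive in the variable $x$. Let $N$ be the number of distinct head subformulas and $M$ the number of distinct side subformulas occurring in any of the $\phi_i$. Then $\rho(\phi)\le (N+1)(M+1)$.
   Context: Formulas of the intuitionistic propositional calculus (IPC) are built from propositional variables, $\top,\bot,\wedge,\vee,\to$. For a formula $\phi$ containing the variable $x$, define $\phi^0=x$ and $\phi^{n+1}=\phi[\phi^n/x]$ (substitution of $\phi^n$ for $x$ in $\phi$). The Ruitenburg number $\rho(\phi)$ is the least $n\ge 0$ such that $\phi^{n+2}$ and $\phi^n$ are provably equivalent in IPC. A formula is disjunctive in $x$ if it is generated by the grammar $\phi ::= x \mid \alpha\to\phi \mid \beta\vee\phi \mid \phi\vee\phi$, where $\alpha,\beta$ range over IPC formulas not containing $x$ (disjunctions taken up to commutativity). In the parse of a disjunctive formula, each formula $\alpha$ used in a production $\alpha\to\phi'$ is a head subformula, and each formula $\beta$ used in a production $\beta\vee\phi'$ is a side subformula. *)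

theory Defs
  imports Main
begin

datatype form = Var nat | Top | Bot | And form form | Or form form | Imp form form

fun vars :: "form \<Rightarrow> nat set" where
  "vars (Var y) = {y}"
| "vars Top = {}"
| "vars Bot = {}"
| "vars (And p q) = vars p \<union> vars q"
| "vars (Or p q) = vars p \<union> vars q"
| "vars (Imp p q) = vars p \<union> vars q"

inductive nd :: "form set \<Rightarrow> form \<Rightarrow> bool" where
  Ass: "p \<in> G \<Longrightarrow> nd G p"
| TopI: "nd G Top"
| BotE: "nd G Bot \<Longrightarrow> nd G p"
| AndI: "nd G p \<Longrightarrow> nd G q \<Longrightarrow> nd G (And p q)"
| AndE1: "nd G (And p q) \<Longrightarrow> nd G p"
| AndE2: "nd G (And p q) \<Longrightarrow> nd G q"
| OrI1: "nd G p \<Longrightarrow> nd G (Or p q)"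
| OrI2: "nd G q \<Longrightarrow> nd G (Or p q)"
| OrE: "nd G (Or p q) \<Longrightarrow> nd (insert p G) r \<Longrightarrow> nd (insert q G) r \<Longrightarrow> nd G r"
| ImpI: "nd (insert p G) q \<Longrightarrow> nd G (Imp p q)"
| ImpE: "nd G (Imp p q) \<Longrightarrow> nd G p \<Longrightarrow> nd G q"

definition ipc_equiv :: "form \<Rightarrow> form \<Rightarrow> bool" where
  "ipc_equiv p q \<longleftrightarrow> nd {} (Imp p q) \<and> nd {} (Imp q p)"

fun subst :: "nat \<Rightarrow> form \<Rightarrow> form \<Rightarrow> form" where
  "subst x s (Var y) = (if y = x then s else Var y)"
| "subst x s Top = Top"
| "subst x s Bot = Bot"
| "subst x s (And p q) = And (subst x s p) (subst x s q)"
| "subst x s (Or p q) = Or (subst x s p) (subst x s q)"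
| "subst x s (Imp p q) = Imp (subst x s p) (subst x s q)"

fun iter :: "nat \<Rightarrow> form \<Rightarrow> nat \<Rightarrow> form" where
  "iter x phi 0 = Var x"
| "iter x phi (Suc n) = subst x (iter x phi n) phi"

definition ruitenburg :: "nat \<Rightarrow> form \<Rightarrow> nat" where
  "ruitenburg x phi = (LEAST n. ipc_equiv (iter x phi (n + 2)) (iter x phi n))"

inductive disjunctive :: "nat \<Rightarrow> form \<Rightarrow> bool" where
  dVar: "disjunctive x (Var x)"
| dImp: "x \<notin> vars a \<Longrightarrow> disjunctive x p \<Longrightarrow> disjunctive x (Imp a p)"
| dOrL: "x \<notin> vars b \<Longrightarrow> disjunctive x p \<Longrightarrow> disjunctive x (Or b p)"
| dOrR: "x \<notin> vars b \<Longrightarrow> disjunctive x p \<Longrightarrow> disjunctive x (Or p b)"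
| dOr: "disjunctive x p \<Longrightarrow> disjunctive x q \<Longrightarrow> disjunctive x (Or p q)"

text \<open>Head and side subformulas of the (unique up to commutativity) parse of a
  disjunctive formula. The disjunct free of x is the side formula; the other is parsed further.\<close>
fun heads :: "nat \<Rightarrow> form \<Rightarrow> form set" where
  "heads x (Imp a p) = insert a (heads x p)"
| "heads x (Or p q) = (if x \<in> vars p then heads x p else {}) \<union> (if x \<in> vars q then heads x q else {})"
| "heads x _ = {}"

fun sides :: "nat \<Rightarrow> form \<Rightarrow> form set" where
  "sides x (Imp a p) = sides x p"
| "sides x (Or p q) = (if x \<in> vars p then sides x p else {p}) \<union> (if x \<in> vars q then sides x q else {q})"
| "sides x _ = {}"

fun conj_list :: "form list \<Rightarrow> form" where
  "conj_list [] = Top"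
| "conj_list [p] = p"
| "conj_list (p # ps) = And p (conj_list ps)"

end

theory Submission
  imports Defs
begin

text \<open>In fact \<open>\<rho>(\<phi>) \<le> N + 1\<close>. Call a head \<open>a\<close> settled in a context \<open>\<Gamma>\<close> if \<open>\<Gamma> \<turnstile> a\<close> or
  \<open>\<Gamma>, a \<turnstile> Y \<rightarrow> Z\<close>. If all heads are settled, induction along the parse of a disjunctive
  \<open>\<psi>\<close> turns \<open>\<Gamma> \<turnstile> \<psi>(Y)\<close> into \<open>\<Gamma> \<turnstile> Y \<or> \<psi>(Z)\<close>; with \<open>Y = \<phi>(Z)\<close> this yields
  \<open>\<Gamma> \<turnstile> \<phi>(\<phi>(Z)) \<rightarrow> \<phi>(Z)\<close>. Hence \<open>\<phi>\<^sup>n\<^sup>+\<^sup>2 \<rightarrow> \<phi>\<^sup>n\<^sup>+\<^sup>1\<close> is provable once \<open>n\<close> bounds the number of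
  heads not provable in \<open>\<Gamma>\<close>: a head \<open>a\<close> that is not provable becomes provable after adding
  it to the context, which lowers that number. Since \<open>\<phi>\<close> is inflationary
  (\<open>Z \<turnstile> \<phi>(Z)\<close>), the sequence \<open>\<phi>\<^sup>n\<close> stabilises at \<open>n = N + 1\<close>.\<close>

lemma nd_mono: "nd G p \<Longrightarrow> G \<subseteq> G' \<Longrightarrow> nd G' p"
proof (induction arbitrary: G' rule: nd.induct)
  case (OrE G p q r)
  then show ?case by (meson insert_mono nd.OrE)
next
  case (ImpI p G q)
  then show ?case by (meson insert_mono nd.ImpI)
qed (auto intro: nd.intros)

lemma nd_insert: "nd G p \<Longrightarrow> nd (insert a G) p"
  using nd_mono by blast

lemma nd_assume: "nd (insert p G) p"
  by (rule nd.Ass) simp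

lemma nd_ImpD: "nd G (Imp a q) \<Longrightarrow> nd (insert a G) q"
  by (rule nd.ImpE[OF nd_insert nd_assume])

lemma nd_Imp_trans: "nd G (Imp A B) \<Longrightarrow> nd G (Imp B C) \<Longrightarrow> nd G (Imp A C)"
  by (rule nd.ImpI, rule nd.ImpE[OF nd_insert nd_ImpD])

lemma nd_Or_map:
  "nd G (Or A B) \<Longrightarrow> nd (insert A G) A' \<Longrightarrow> nd (insert B G) B' \<Longrightarrow> nd G (Or A' B')"
  by (erule nd.OrE) (erule nd.OrI1, erule nd.OrI2)

lemma nd_Or_mono_right: "nd G (Or Y A) \<Longrightarrow> nd (insert A G) B \<Longrightarrow> nd G (Or Y B)"
  using nd_Or_map[OF _ nd_assume] by blast

lemma nd_Or_cases_Or: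
  assumes "nd G (Or A B)" "nd (insert A G) (Or Y A')" "nd (insert B G) (Or Y B')"
  shows "nd G (Or Y (Or A' B'))"
proof (rule nd.OrE[OF assms(1)])
  show "nd (insert A G) (Or Y (Or A' B'))"
    using assms(2) by (rule nd_Or_mono_right) (intro nd.OrI1 nd_assume)
  show "nd (insert B G) (Or Y (Or A' B'))"
    using assms(3) by (rule nd_Or_mono_right) (intro nd.OrI2 nd_assume)
qed

lemma subst_fresh: "x \<notin> vars p \<Longrightarrow> subst x Y p = p"
  by (induction p) auto

lemma disjunctive_var_occurs: "disjunctive x p \<Longrightarrow> x \<in> vars p"
  by (induction rule: disjunctive.induct) auto

lemma nd_subst_mono:
  "disjunctive x p \<Longrightarrow> nd G (Imp Y Z) \<Longrightarrow> nd G (subst x Y p) \<Longrightarrow> nd G (subst x Z p)"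
proof (induction arbitrary: G rule: disjunctive.induct)
  case (dVar x)
  then show ?case by (auto intro: nd.ImpE)
next
  case (dImp x a p)
  then have "nd (insert a G) (subst x Z p)"
    by (simp add: subst_fresh nd_ImpD nd_insert)
  then show ?case using dImp by (simp add: subst_fresh nd.ImpI)
next
  case (dOrL x b p)
  have "nd (insert (subst x Y p) G) (subst x Z p)"
    using dOrL.IH[OF nd_insert[OF dOrL(4)] nd_assume] .
  then show ?case
    using dOrL nd_Or_map[OF _ nd_assume] by (simp add: subst_fresh)
next
  case (dOrR x b p)
  have "nd (insert (subst x Y p) G) (subst x Z p)"
    using dOrR.IH[OF nd_insert[OF dOrR(4)] nd_assume] .
  then show ?case
    using dOrR nd_Or_map[OF _ _ nd_assume] by (simp add: subst_fresh)
next
  case (dOr x p q)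
  show ?case
    using dOr nd_Or_map[OF _ dOr.IH(1)[OF nd_insert[OF dOr(5)] nd_assume]
                             dOr.IH(2)[OF nd_insert[OF dOr(5)] nd_assume]]
    by simp
qed

lemma nd_subst_inflationary: "disjunctive x p \<Longrightarrow> nd G Y \<Longrightarrow> nd G (subst x Y p)"
proof (induction arbitrary: G rule: disjunctive.induct)
  case (dImp x a p)
  then show ?case by (simp add: subst_fresh nd.ImpI nd_insert)
qed (auto simp: subst_fresh intro: nd.intros)

definition settles :: "form set \<Rightarrow> form \<Rightarrow> form \<Rightarrow> bool" where
  "settles G W a \<longleftrightarrow> nd G a \<or> nd (insert a G) W"

lemma settles_insert: "settles G W a \<Longrightarrow> settles (insert c G) W a"
  unfolding settles_def by (metis insert_commute nd_insert)

lemma nd_subst_Or_if_settles: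
  assumes "disjunctive x p" "\<forall>a \<in> heads x p. settles G (Imp Y Z) a" "nd G (subst x Y p)"
  shows "nd G (Or Y (subst x Z p))"
  using assms
proof (induction arbitrary: G rule: disjunctive.induct)
  case (dVar x)
  then show ?case by (auto intro: nd.OrI1)
next
  case (dImp x a p)
  have hyp: "nd G (Imp a (subst x Y p))" using dImp by (simp add: subst_fresh)
  have "settles G (Imp Y Z) a" using dImp by simp
  then have "nd G (Or Y (Imp a (subst x Z p)))"
    unfolding settles_def
  proof
    assume "nd G a"
    then have "nd G (Or Y (subst x Z p))"
      using dImp nd.ImpE[OF hyp] by simp
    then show ?thesis
      by (rule nd_Or_mono_right) (intro nd.ImpI nd_insert nd_assume)
  next
    assume "nd (insert a G) (Imp Y Z)"
    then have "nd (insert a G) (subst x Z p)"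
      using nd_subst_mono[OF dImp.hyps(2)] nd_ImpD[OF hyp] by blast
    then show ?thesis by (intro nd.OrI2 nd.ImpI)
  qed
  then show ?case using dImp by (simp add: subst_fresh)
next
  case (dOrL x b p)
  have "nd (insert (subst x Y p) G) (Or Y (subst x Z p))"
    using dOrL disjunctive_var_occurs settles_insert by (intro dOrL.IH nd_assume) auto
  then show ?case
    using dOrL nd_Or_cases_Or[OF _ nd.OrI2[OF nd_assume]] by (simp add: subst_fresh)
next
  case (dOrR x b p)
  have "nd (insert (subst x Y p) G) (Or Y (subst x Z p))"
    using dOrR disjunctive_var_occurs settles_insert by (intro dOrR.IH nd_assume) auto
  then show ?case
    using dOrR nd_Or_cases_Or[OF _ _ nd.OrI2[OF nd_assume]] by (simp add: subst_fresh)
next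
  case (dOr x p q)
  have "nd (insert (subst x Y p) G) (Or Y (subst x Z p))"
    using dOr disjunctive_var_occurs settles_insert by (intro dOr.IH(1) nd_assume) auto
  moreover have "nd (insert (subst x Y q) G) (Or Y (subst x Z q))"
    using dOr disjunctive_var_occurs settles_insert by (intro dOr.IH(2) nd_assume) auto
  ultimately show ?case
    using dOr nd_Or_cases_Or by simp
qed

lemma nd_conj_listD: "nd G (conj_list qs) \<Longrightarrow> q \<in> set qs \<Longrightarrow> nd G q"
  by (induction qs arbitrary: q rule: conj_list.induct) (auto intro: nd.AndE1 nd.AndE2)

lemma nd_conj_listI: "\<forall>q \<in> set qs. nd G q \<Longrightarrow> nd G (conj_list qs)"
  by (induction qs rule: conj_list.induct) (auto intro: nd.AndI nd.TopI)

lemma subst_conj_list: "subst x Y (conj_list qs) = conj_list (map (subst x Y) qs)"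
  by (induction qs rule: conj_list.induct) auto

lemma finite_heads: "finite (heads x p)"
  by (induction x p rule: heads.induct) auto

lemma nd_subst_conj_list_inflationary:
  assumes "\<forall>p \<in> set ps. disjunctive x p"
  shows "nd G (Imp Z (subst x Z (conj_list ps)))"
  using assms nd_subst_inflationary[OF _ nd_assume]
  by (auto simp: subst_conj_list intro!: nd.ImpI nd_conj_listI)

lemma nd_subst_conj_list_idem:
  assumes disj: "\<forall>p \<in> set ps. disjunctive x p"
    and settled: "\<forall>a \<in> (\<Union>p \<in> set ps. heads x p). settles G (Imp (subst x Z \<phi>) Z) a"
    and \<phi>: "\<phi> \<equiv> conj_list ps"
  shows "nd G (Imp (subst x (subst x Z \<phi>) \<phi>) (subst x Z \<phi>))"
proof -
  define Y where "Y = subst x Z \<phi>"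
  define G' where "G' = insert (subst x Y \<phi>) G"
  have "nd G' (subst x Z p)" if p: "p \<in> set ps" for p
  proof -
    have "nd G' (subst x Y p)"
      using nd_conj_listD[OF nd_assume] p by (simp add: G'_def \<phi> subst_conj_list)
    moreover have "\<forall>a \<in> heads x p. settles G' (Imp Y Z) a"
      using settled p settles_insert by (auto simp: G'_def Y_def)
    ultimately have "nd G' (Or Y (subst x Z p))"
      using nd_subst_Or_if_settles disj p by blast
    moreover have "nd (insert Y G') (subst x Z p)"
      using nd_conj_listD[OF nd_assume] p by (simp add: Y_def \<phi> subst_conj_list)
    ultimately show ?thesis
      using nd.OrE nd_assume by blast
  qed
  then have "nd G' Y"
    by (simp add: Y_def \<phi> subst_conj_list nd_conj_listI)
  then show ?thesis unfolding G'_def Y_def by (rule nd.ImpI)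
qed

lemma nd_iter_stable:
  assumes disj: "\<forall>p \<in> set ps. disjunctive x p"
    and "card {a \<in> (\<Union>p \<in> set ps. heads x p). \<not> nd G a} \<le> n"
  shows "nd G (Imp (iter x (conj_list ps) (Suc (Suc n))) (iter x (conj_list ps) (Suc n)))"
proof -
  let ?H = "\<Union>p \<in> set ps. heads x p"
  have fin: "finite ?H" using finite_heads by simp
  show ?thesis
    using assms(2)
  proof (induction n arbitrary: G)
    case 0
    then have "\<forall>a \<in> ?H. nd G a" using fin by auto
    then show ?case
      by (simp only: iter.simps) (intro nd_subst_conj_list_idem[OF disj], auto simp: settles_def)
  next
    case (Suc n)
    have "settles G (Imp (iter x (conj_list ps) (Suc (Suc n))) (iter x (conj_list ps) (Suc n))) a"
      if a: "a \<in> ?H" for a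
    proof (cases "nd G a")
      case False
      have "{b \<in> ?H. \<not> nd (insert a G) b} \<subseteq> {b \<in> ?H. \<not> nd G b} - {a}"
        using nd_insert nd_assume by blast
      then have "card {b \<in> ?H. \<not> nd (insert a G) b} \<le> card {b \<in> ?H. \<not> nd G b} - 1"
        using False a fin card_mono[of "{b \<in> ?H. \<not> nd G b} - {a}"]
        by (simp add: card_Diff_singleton)
      then show ?thesis
        using Suc by (simp add: settles_def)
    qed (simp add: settles_def)
    then show ?case
      by (simp only: iter.simps) (intro nd_subst_conj_list_idem[OF disj], auto)
  qed
qed

theorem mainTheorem1:
  fixes x :: nat and ps :: "form list"
  assumes "ps \<noteq> []"
    and "\<forall>p \<in> set ps. disjunctive x p"
  shows "ruitenburg x (conj_list ps)
         \<le> (card (\<Union>p \<in> set ps. heads x p) + 1) * (card (\<Union>p \<in> set ps. sides x p) + 1)"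
proof -
  let ?H = "\<Union>p \<in> set ps. heads x p"
  let ?N = "card ?H"
  let ?I = "iter x (conj_list ps)"
  have unproved_le: "card {a \<in> ?H. \<not> nd {} a} \<le> ?N"
    using finite_heads by (intro card_mono) auto
  have down1: "nd {} (Imp (?I (Suc (Suc ?N))) (?I (Suc ?N)))"
    using nd_iter_stable[OF assms(2) unproved_le] .
  have down2: "nd {} (Imp (?I (Suc (Suc (Suc ?N)))) (?I (Suc (Suc ?N))))"
    using nd_iter_stable[OF assms(2)] unproved_le le_SucI by blast
  have up: "nd {} (Imp (?I n) (?I (Suc n)))" for n
    using nd_subst_conj_list_inflationary[OF assms(2)] by simp
  have "Suc ?N + 2 = Suc (Suc (Suc ?N))" by simp
  then have "ipc_equiv (?I (Suc ?N + 2)) (?I (Suc ?N))"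
    unfolding ipc_equiv_def
    using nd_Imp_trans[OF down2 down1] nd_Imp_trans[OF up[of "Suc ?N"] up[of "Suc (Suc ?N)"]]
    by simp
  then have "ruitenburg x (conj_list ps) \<le> ?N + 1"
    unfolding ruitenburg_def by (simp add: Least_le)
  also have "\<dots> \<le> (?N + 1) * (card (\<Union>p \<in> set ps. sides x p) + 1)" by simp
  finally show ?thesis .
qed

end
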